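(* Let $A$ be a linear Nakayama algebra with the canonical ordering $1\to2\to\cdots\to n$ of its vertices. Then the following are equivalent: (i) $A$ is Auslander regular; (ii) the inverse Auslander-Reiten map $\sigma$ is a bijection; (iii) there exists a Bruhat decomposition $C_A=U_1PU_2$ of the Coxeter matrix with $U_1$ the identity matrix. In this case, the Coxeter permutation coincides with the Auslander-Reiten permutation.
   Context: A linear Nakayama algebra is $A=KQ/I$ with $K$ a field, $Q$ the quiver $1\to2\to\cdots\to n$ and $I$ an admissible ideal; it has finite global dimension. Modules are finitely generated right modules, $P(i)=e_iA$, $I(i)=D(Ae_i)$. For each vertex $x$ the last non-zero term of a minimal injective coresolution of $P(x)$ is an indecomposable injective $I(y)$, and $\sigma(x)=y$ defines the inverse Auslander-Reiten map. $A$ is Auslander regular if it has finite global dimension and a minimal injective coresolution $0\to A_A\to I^0\to\cdots$ satisfies $\operatorname{pdim}I^i\le i$ for all $i$; in that case $\Omega^{\operatorname{pdim}I(i)}(I(i))\cong P(j)$ is indecomposable projective and the Auslander-Reiten permutation is $\hat\psi(i)=j$. Cartan matrix $\omega_A=(\dim_Ke_jAe_i)_{i,j}$, Coxeter matrix $C_A=-\omega_A^T\omega_A^{-1}$. A Bruhat decomposition $M=U_1PU_2$ of an invertible matrix has $U_1,U_2$ upper triangular and $P$ a permutation matrix (unique); the Coxeter permutation is $p_A(i)=j$ if the non-zero entry of column $i$ of $P$ in a Bruhat decomposition of $C_A$ lies in row $j$. *)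

theory Defs
  imports "Jordan_Normal_Form.Gauss_Jordan_Elimination"
begin

text \<open>A linear Nakayama algebra A = KQ/I, Q = 1 -> 2 -> ... -> n, I admissible, is determined
(up to isomorphism, independently of the field K) by its Kupisch series
c i = dim P(i) (right modules, P(i) = e_i A has composition factors S(i),...,S(i + c i - 1)).\<close>

definition kupisch :: "nat \<Rightarrow> (nat \<Rightarrow> nat) \<Rightarrow> bool" where
  "kupisch n c \<longleftrightarrow> 1 \<le> n \<and> c n = 1 \<and>
     (\<forall>i. 1 \<le> i \<and> i < n \<longrightarrow> 2 \<le> c i \<and> c i \<le> c (i+1) + 1)"

text \<open>Every indecomposable module is uniserial; a module (i,l) denotes the uniserial module
with top S(i) and length l, i.e. composition factors S(i),...,S(i+l-1).  Length 0 encodes the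
zero module.\<close>

type_synonym umod = "nat \<times> nat"

definition is_zero :: "umod \<Rightarrow> bool" where
  "is_zero M \<longleftrightarrow> snd M = 0"

definition socle :: "umod \<Rightarrow> nat" where
  "socle M = fst M + snd M - 1"

definition proj :: "(nat \<Rightarrow> nat) \<Rightarrow> nat \<Rightarrow> umod" where
  "proj c i = (i, c i)"

text \<open>Top of the indecomposable injective I(s) = D(A e_s): the largest uniserial module with
socle S(s).\<close>
definition inj_top :: "(nat \<Rightarrow> nat) \<Rightarrow> nat \<Rightarrow> nat" where
  "inj_top c s = (LEAST t. 1 \<le> t \<and> s < t + c t)"

definition inj :: "(nat \<Rightarrow> nat) \<Rightarrow> nat \<Rightarrow> umod" where
  "inj c s = (inj_top c s, s + 1 - inj_top c s)"

text \<open>Syzygy: kernel of the projective cover P(i) -> (i,l).\<close>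
definition syz :: "(nat \<Rightarrow> nat) \<Rightarrow> umod \<Rightarrow> umod" where
  "syz c M = (if snd M = 0 then M
              else (fst M + snd M, c (fst M) - snd M))"

text \<open>Cosyzygy: cokernel of the injective envelope (i,l) -> I(socle (i,l)).\<close>
definition cosyz :: "(nat \<Rightarrow> nat) \<Rightarrow> umod \<Rightarrow> umod" where
  "cosyz c M = (if snd M = 0 then M
                else (inj_top c (socle M), fst M - inj_top c (socle M)))"

definition pdim :: "(nat \<Rightarrow> nat) \<Rightarrow> umod \<Rightarrow> nat" where
  "pdim c M = (LEAST k. is_zero ((syz c ^^ (k+1)) M))"

text \<open>The k-th term I^k of the minimal injective coresolution of A_A = P(1) + ... + P(n),
as a multiset of vertices y (standing for the summands I(y)).  It is the direct sum of the
k-th terms of the minimal injective coresolutions of the P(x), and the k-th term for P(x) is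
the injective envelope I(socle (cosyz^k P(x))) of the k-th cosyzygy, when that is non-zero.\<close>
definition inj_coresol_term :: "nat \<Rightarrow> (nat \<Rightarrow> nat) \<Rightarrow> nat \<Rightarrow> nat multiset" where
  "inj_coresol_term n c k =
     image_mset (\<lambda>x. socle ((cosyz c ^^ k) (proj c x)))
       (filter_mset (\<lambda>x. \<not> is_zero ((cosyz c ^^ k) (proj c x))) (mset_set {1..n}))"

text \<open>Auslander regular (finite global dimension is automatic for linear Nakayama
algebras): pdim I^k \<le> k for all k; pdim of a direct sum is the maximum over the summands.\<close>
definition auslander_regular :: "nat \<Rightarrow> (nat \<Rightarrow> nat) \<Rightarrow> bool" where
  "auslander_regular n c \<longleftrightarrow>
     (\<forall>k. \<forall>y \<in># inj_coresol_term n c k. pdim c (inj c y) \<le> k)"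

text \<open>Inverse Auslander-Reiten map: the last non-zero term of the minimal injective coresolution
of P(x) is I(sigma x).\<close>
definition last_coresol_index :: "(nat \<Rightarrow> nat) \<Rightarrow> nat \<Rightarrow> nat" where
  "last_coresol_index c x = (LEAST k. is_zero ((cosyz c ^^ (k+1)) (proj c x)))"

definition inv_AR_map :: "(nat \<Rightarrow> nat) \<Rightarrow> nat \<Rightarrow> nat" where
  "inv_AR_map c x = socle ((cosyz c ^^ last_coresol_index c x) (proj c x))"

text \<open>Auslander-Reiten permutation: Omega^(pdim I(i)) (I(i)) = P(j), psi i = j (the top of it).\<close>
definition AR_perm :: "(nat \<Rightarrow> nat) \<Rightarrow> nat \<Rightarrow> nat" where
  "AR_perm c i = fst ((syz c ^^ pdim c (inj c i)) (inj c i))"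

text \<open>Matrix indices 0..n-1 correspond to vertices 1..n.  Entry (i,j) is
dim e_j A e_i = [P(j) : S(i)], which is 1 iff j \<le> i \<le> j + c j - 1.\<close>
definition cartan :: "nat \<Rightarrow> (nat \<Rightarrow> nat) \<Rightarrow> real mat" where
  "cartan n c = mat n n (\<lambda>(i,j). if j \<le> i \<and> i < j + c (j+1) then 1 else 0)"

definition coxeter :: "nat \<Rightarrow> (nat \<Rightarrow> nat) \<Rightarrow> real mat" where
  "coxeter n c = - ((cartan n c)\<^sup>T * the (mat_inverse (cartan n c)))"

definition perm_matrix :: "nat \<Rightarrow> (nat \<Rightarrow> nat) \<Rightarrow> real mat" where
  "perm_matrix n p = mat n n (\<lambda>(i,j). if i = p j then 1 else 0)"

text \<open>Bruhat decomposition M = U1 P U2: U1, U2 invertible upper triangular, P the permutation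
matrix of a permutation p of {0..<n} (the non-zero entry of column j is in row p j).\<close>
definition bruhat_decomp :: "nat \<Rightarrow> real mat \<Rightarrow> real mat \<Rightarrow> (nat \<Rightarrow> nat) \<Rightarrow> real mat \<Rightarrow> bool" where
  "bruhat_decomp n M U1 p U2 \<longleftrightarrow>
     U1 \<in> carrier_mat n n \<and> U2 \<in> carrier_mat n n \<and>
     upper_triangular U1 \<and> upper_triangular U2 \<and>
     invertible_mat U1 \<and> invertible_mat U2 \<and>
     p permutes {0..<n} \<and>
     M = U1 * perm_matrix n p * U2"

end

theory Submission
  imports Defs "Jordan_Normal_Form.Determinant"
begin

text \<open>
  Indecomposable modules are intervals of vertices. Writing P(a+1) = (a, E a] and
  I(q) = (G q, q] (E = proj_end, G = inj_start), the maps E and G form a Galois connection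
  (G q \<le> a iff q \<le> E a), and the cosyzygies of P(a+1), resp. the syzygies of I(s), are the
  intervals between consecutive terms of the sequences obtained by alternately applying G,
  resp. E. Comparing two such sequences, which interlace by the Galois connection, shows that
  all terms I^k of the injective coresolution of P(a+1) have projective dimension at most k
  exactly when the syzygies of I(sigma(a+1)) end in P(a+1); so A is Auslander regular iff
  psi sigma = id.

  The Coxeter matrix -C^T C^(-1) is minus the matrix whose row i is the alternating sum of the
  unit vectors at the socles of the cosyzygies of P(i+1), since multiplying it with C gives an
  alternating sum of dimension vectors that telescopes to C^T. The first non-zero entry of row i
  sits in column sigma(i+1) - 1, so C_A = P U_2 with U_2 upper triangular exactly when sigma is
  a bijection, with P the matrix of sigma^(-1); any Bruhat decomposition has the same
  permutation. The inverse of the first matrix is built in the same way from the syzygies of the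
  injectives, and reading the identity between the two at a suitable entry shows that an
  injective sigma satisfies sigma psi = id.
\<close>

lemma parity_propagate:
  fixes P :: "nat \<Rightarrow> bool"
  assumes step: "\<And>j. j + 2 \<le> N \<Longrightarrow> P (j + 2) \<longleftrightarrow> P j"
    and base: "P i" "P (Suc i)" and i: "Suc i \<le> N" and j: "j \<le> N"
  shows "P j"
proof -
  have mod2: "P k \<longleftrightarrow> P (k mod 2)" if "k \<le> N" for k
    using that
  proof (induction k rule: less_induct)
    case (less k)
    show ?case
    proof (cases "k < 2")
      case False
      then obtain j where k: "k = j + 2" by (metis add.commute le_add_diff_inverse not_less)
      then have "P k \<longleftrightarrow> P j" using step less.prems by simp
      also have "\<dots> \<longleftrightarrow> P (j mod 2)" using k less.prems by (intro less.IH) auto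
      finally show ?thesis using k by simp
    qed simp
  qed
  have "j mod 2 = i mod 2 \<or> j mod 2 = Suc i mod 2" by (simp add: mod2_eq_if)
  then show ?thesis using mod2 base i j by (metis Suc_leD)
qed

lemma decreasing_stalls:
  fixes u :: "nat \<Rightarrow> nat"
  assumes "\<And>k. u (Suc k) \<le> u k"
  shows "\<exists>k. u (Suc k) = u k"
proof (rule ccontr)
  assume "\<nexists>k. u (Suc k) = u k"
  then have dec: "u (Suc k) < u k" for k using assms[of k] by (simp add: order_less_le)
  have "u k + k \<le> u 0" for k
  proof (induction k)
    case (Suc k)
    then show ?case using dec[of k] by simp
  qed simp
  from this[of "Suc (u 0)"] show False by simp
qed

lemma bounded_increasing_stalls:
  fixes u :: "nat \<Rightarrow> nat"
  assumes "\<And>k. u k \<le> u (Suc k)" and "\<And>k. u k \<le> b"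
  shows "\<exists>k. u (Suc k) = u k"
proof -
  obtain k where "b - u (Suc k) = b - u k"
    using decreasing_stalls[of "\<lambda>k. b - u k"] assms(1) by (auto intro: diff_le_mono2)
  then show ?thesis using assms(2)[of k] assms(2)[of "Suc k"] by (metis diff_diff_cancel)
qed

lemma iterate_zero_iff_stalled:
  fixes T :: "umod \<Rightarrow> umod" and X :: umod and u :: "nat \<Rightarrow> nat"
  assumes fix_zero: "\<And>Y. Defs.is_zero Y \<Longrightarrow> T Y = Y"
    and zero_iff: "\<And>k. \<forall>j<k. u (Suc j) \<noteq> u j \<Longrightarrow>
      Defs.is_zero ((T ^^ k) X) \<longleftrightarrow> u (Suc k) = u k"
  shows "Defs.is_zero ((T ^^ k) X) \<longleftrightarrow> (\<exists>j\<le>k. u (Suc j) = u j)"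
proof (induction k)
  case 0
  then show ?case using zero_iff[of 0] by simp
next
  case (Suc k)
  show ?case
  proof (cases "\<exists>j\<le>k. u (Suc j) = u j")
    case True
    then show ?thesis using Suc fix_zero by (auto intro: le_SucI)
  next
    case False
    then have "\<forall>j<Suc k. u (Suc j) \<noteq> u j" by auto
    then show ?thesis using zero_iff[of "Suc k"] False by (auto simp: le_Suc_eq)
  qed
qed

lemma first_stall:
  fixes u :: "nat \<Rightarrow> nat" and Z :: "nat \<Rightarrow> bool"
  assumes Z_iff: "\<And>k. Z k \<longleftrightarrow> (\<exists>j\<le>k. u (Suc j) = u j)"
    and no_stall_0: "u 1 \<noteq> u 0" and stall: "u (Suc m) = u m"
  defines "L \<equiv> LEAST k. Z (Suc k)"
  shows "Z k \<longleftrightarrow> L < k" and "j \<le> L \<Longrightarrow> u (Suc j) \<noteq> u j" and "u (L + 2) = u (L + 1)"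
proof -
  have Z_mono: "Z k'" if "Z k" "k \<le> k'" for k k' using that unfolding Z_iff by (blast intro: le_trans)
  have "Z (Suc m)" unfolding Z_iff using stall le_SucI by blast
  then have "Z (Suc L)" unfolding L_def by (rule LeastI)
  moreover have "\<not> Z L"
  proof (cases L)
    case 0
    then show ?thesis using Z_iff[of 0] no_stall_0 by simp
  next
    case (Suc L')
    then show ?thesis using not_less_Least[of L' "\<lambda>k. Z (Suc k)"] L_def by simp
  qed
  ultimately show Z_iff_L: "Z k \<longleftrightarrow> L < k" for k
    using Z_mono by (metis Suc_leI not_le)
  show "j \<le> L \<Longrightarrow> u (Suc j) \<noteq> u j" for j
    using Z_iff_L[of j] Z_iff[of j] by auto
  then show "u (L + 2) = u (L + 1)"
    using Z_iff_L[of "Suc L"] Z_iff[of "Suc L"] by (auto simp: le_Suc_eq)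
qed

text \<open>interval_mod p q has composition factors S(p+1), ..., S(q); every indecomposable module is
  of this form.\<close>

definition interval_mod :: "nat \<Rightarrow> nat \<Rightarrow> umod" where
  "interval_mod p q = (p + 1, q - p)"

lemma is_zero_interval_mod [simp]: "Defs.is_zero (interval_mod p q) \<longleftrightarrow> q \<le> p"
  unfolding Defs.is_zero_def interval_mod_def by auto

lemma socle_interval_mod: "p < q \<Longrightarrow> socle (interval_mod p q) = q"
  unfolding socle_def interval_mod_def by auto

lemma cosyz_zero: "Defs.is_zero X \<Longrightarrow> cosyz c X = X"
  unfolding cosyz_def Defs.is_zero_def by auto

lemma syz_zero: "Defs.is_zero X \<Longrightarrow> syz c X = X"
  unfolding syz_def Defs.is_zero_def by auto

locale linear_nakayama =
  fixes n :: nat and c :: "nat \<Rightarrow> nat"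
  assumes kupisch: "kupisch n c"
begin

text \<open>P(a+1) = interval_mod a (proj_end a) and I(q) = interval_mod (inj_start q) q.
  Beyond the last vertex proj_end is constantly n, which keeps it total and monotone.\<close>

definition proj_end :: "nat \<Rightarrow> nat" where
  "proj_end a = (if a < n then a + c (a + 1) else n)"

definition inj_start :: "nat \<Rightarrow> nat" where
  "inj_start q = inj_top c q - 1"

lemma n_ge_1: "1 \<le> n"
  using kupisch unfolding kupisch_def by auto

lemma c_last: "c n = 1"
  using kupisch unfolding kupisch_def by auto

lemma c_step: "1 \<le> i \<Longrightarrow> i < n \<Longrightarrow> 2 \<le> c i \<and> c i \<le> c (i + 1) + 1"
  using kupisch unfolding kupisch_def by auto

lemma c_pos: "1 \<le> i \<Longrightarrow> i \<le> n \<Longrightarrow> 1 \<le> c i"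
  using c_step c_last by (cases "i = n") force+

lemma socle_proj_le_n: "1 \<le> i \<Longrightarrow> i \<le> n \<Longrightarrow> i + c i \<le> n + 1"
proof (induction "n - i" arbitrary: i)
  case 0
  then show ?case using c_last by auto
next
  case (Suc d)
  then have "i < n" by auto
  have "(i + 1) + c (i + 1) \<le> n + 1" using Suc(1)[of "i + 1"] Suc(2) \<open>i < n\<close> by auto
  with c_step[OF Suc(3) \<open>i < n\<close>] show ?case by auto
qed

lemma socle_proj_mono: "1 \<le> t \<Longrightarrow> t \<le> u \<Longrightarrow> u \<le> n \<Longrightarrow> t + c t \<le> u + c u"
proof (induction "u - t" arbitrary: u)
  case (Suc d)
  then have u: "t \<le> u - 1" "u - 1 < n" "1 \<le> u - 1" by auto
  have "t + c t \<le> (u - 1) + c (u - 1)" using Suc u by (intro Suc(1)) auto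
  moreover have "c (u - 1) \<le> c u + 1" using c_step[of "u - 1"] u by auto
  ultimately show ?case using u by auto
qed simp

lemma proj_end_le_n: "proj_end a \<le> n"
  unfolding proj_end_def using socle_proj_le_n[of "a + 1"] by auto

lemma less_proj_end: "a < n \<Longrightarrow> a < proj_end a"
  unfolding proj_end_def using c_pos[of "a + 1"] by auto

lemma proj_end_mono: "a \<le> b \<Longrightarrow> proj_end a \<le> proj_end b"
  unfolding proj_end_def using socle_proj_mono[of "a + 1" "b + 1"] socle_proj_le_n[of "a + 1"]
  by auto

lemma inj_top_spec:
  assumes "q \<le> n"
  shows "1 \<le> inj_top c q" "q < inj_top c q + c (inj_top c q)" "inj_top c q \<le> max 1 q"
proof -
  let ?P = "\<lambda>t. 1 \<le> t \<and> q < t + c t"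
  have w: "?P (max 1 q)" using c_pos[of "max 1 q"] assms n_ge_1 by auto
  show "1 \<le> inj_top c q" "q < inj_top c q + c (inj_top c q)" "inj_top c q \<le> max 1 q"
    unfolding inj_top_def using LeastI[of ?P, OF w] Least_le[of ?P, OF w] by auto
qed

lemma inj_start_less: "1 \<le> q \<Longrightarrow> q \<le> n \<Longrightarrow> inj_start q < q"
  using inj_top_spec[of q] unfolding inj_start_def by auto

lemma inj_start_le: "q \<le> n \<Longrightarrow> inj_start q \<le> q"
  using inj_top_spec[of q] unfolding inj_start_def by auto

lemma inj_start_less_n: "q \<le> n \<Longrightarrow> inj_start q < n"
  using inj_top_spec[of q] n_ge_1 unfolding inj_start_def by auto

lemma inj_start_le_iff:
  assumes q: "q \<le> n"
  shows "inj_start q \<le> a \<longleftrightarrow> q \<le> proj_end a"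
proof (cases "a < n")
  case False
  then show ?thesis using inj_start_less_n[OF q] q unfolding proj_end_def by auto
next
  case True
  note top = inj_top_spec[OF q]
  show ?thesis
  proof
    assume "inj_start q \<le> a"
    then have "inj_top c q \<le> a + 1" using top unfolding inj_start_def by auto
    then show "q \<le> proj_end a"
      using socle_proj_mono[of "inj_top c q" "a + 1"] top True unfolding proj_end_def by auto
  next
    assume "q \<le> proj_end a"
    then have "inj_top c q \<le> a + 1"
      using True unfolding proj_end_def inj_top_def by (intro Least_le) auto
    then show "inj_start q \<le> a" unfolding inj_start_def by auto
  qed
qed

lemma inj_start_mono: "q \<le> q' \<Longrightarrow> q' \<le> n \<Longrightarrow> inj_start q \<le> inj_start q'"
  using inj_start_le_iff[of q "inj_start q'"] inj_start_le_iff[of q' "inj_start q'"] by auto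

lemma le_proj_end_inj_start: "q \<le> n \<Longrightarrow> q \<le> proj_end (inj_start q)"
  using inj_start_le_iff by auto

lemma inj_start_proj_end_le: "inj_start (proj_end a) \<le> a"
  using inj_start_le_iff[of "proj_end a" a] proj_end_le_n by auto

lemma proj_eq: "a < n \<Longrightarrow> proj c (a + 1) = interval_mod a (proj_end a)"
  unfolding proj_def interval_mod_def proj_end_def by auto

lemma inj_eq: "s \<le> n \<Longrightarrow> inj c s = interval_mod (inj_start s) s"
  using inj_top_spec[of s] unfolding inj_def interval_mod_def inj_start_def by auto

lemma cosyz_interval_mod:
  "p < q \<Longrightarrow> q \<le> n \<Longrightarrow> inj_start q \<le> p \<Longrightarrow>
   cosyz c (interval_mod p q) = interval_mod (inj_start q) p"
  using inj_top_spec[of q] unfolding cosyz_def interval_mod_def inj_start_def socle_def by auto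

lemma syz_interval_mod:
  "p < q \<Longrightarrow> q \<le> proj_end p \<Longrightarrow> p < n \<Longrightarrow>
   syz c (interval_mod p q) = interval_mod q (proj_end p)"
  unfolding syz_def interval_mod_def proj_end_def by auto

text \<open>The k-th cosyzygy of P(a+1) is interval_mod (cosyz_seq a (k+1)) (cosyz_seq a k), and
  the k-th syzygy of I(s) is interval_mod (syz_seq s k) (syz_seq s (k+1)), as long as these are
  non-zero.\<close>

fun cosyz_seq :: "nat \<Rightarrow> nat \<Rightarrow> nat" where
  "cosyz_seq a 0 = proj_end a"
| "cosyz_seq a (Suc 0) = a"
| "cosyz_seq a (Suc (Suc k)) = inj_start (cosyz_seq a k)"

fun syz_seq :: "nat \<Rightarrow> nat \<Rightarrow> nat" where
  "syz_seq s 0 = inj_start s"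
| "syz_seq s (Suc 0) = s"
| "syz_seq s (Suc (Suc k)) = proj_end (syz_seq s k)"

lemma cosyz_seq_le_n: "a < n \<Longrightarrow> cosyz_seq a k \<le> n"
  by (induction a k rule: cosyz_seq.induct)
    (auto simp: proj_end_le_n less_imp_le[OF inj_start_less_n])

lemma syz_seq_le_n: "s \<le> n \<Longrightarrow> syz_seq s k \<le> n"
  by (induction s k rule: syz_seq.induct)
    (auto simp: proj_end_le_n less_imp_le[OF inj_start_less_n])

lemma cosyz_seq_Suc_le:
  assumes a: "a < n"
  shows "cosyz_seq a (Suc k) \<le> cosyz_seq a k"
proof -
  have "cosyz_seq a (Suc k) \<le> cosyz_seq a k \<and> cosyz_seq a k \<le> proj_end (cosyz_seq a (Suc k))"
  proof (induction k)
    case 0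
    then show ?case using less_proj_end[OF a] by simp
  next
    case (Suc k)
    have "cosyz_seq a (Suc k) \<le> proj_end (inj_start (cosyz_seq a k))"
      using Suc le_proj_end_inj_start[OF cosyz_seq_le_n[OF a]] le_trans by blast
    then show ?case using Suc inj_start_le_iff[OF cosyz_seq_le_n[OF a, of k]] by simp
  qed
  then show ?thesis by simp
qed

lemma syz_seq_le_Suc:
  assumes s: "s \<le> n"
  shows "syz_seq s k \<le> syz_seq s (Suc k)"
proof -
  have "syz_seq s k \<le> syz_seq s (Suc k) \<and> inj_start (syz_seq s (Suc k)) \<le> syz_seq s k"
  proof (induction k)
    case 0
    then show ?case using inj_start_le[OF s] by simp
  next
    case (Suc k)
    have "inj_start (proj_end (syz_seq s k)) \<le> syz_seq s (Suc k)"
      using Suc inj_start_proj_end_le le_trans by blast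
    then show ?case using Suc inj_start_le_iff[OF syz_seq_le_n[OF s, of "Suc k"]] by simp
  qed
  then show ?thesis by simp
qed

lemma cosyz_seq_antimono: "a < n \<Longrightarrow> j \<le> k \<Longrightarrow> cosyz_seq a k \<le> cosyz_seq a j"
  using antimono_iff_le_Suc[of "cosyz_seq a"] cosyz_seq_Suc_le by (auto dest: antimonoD)

lemma syz_seq_mono: "s \<le> n \<Longrightarrow> j \<le> k \<Longrightarrow> syz_seq s j \<le> syz_seq s k"
  using mono_iff_le_Suc[of "syz_seq s"] syz_seq_le_Suc by (auto dest: monoD)

lemma cosyz_iterate_proj:
  assumes a: "a < n" and strict: "\<forall>j<k. cosyz_seq a (Suc j) < cosyz_seq a j"
  shows "(cosyz c ^^ k) (proj c (a + 1)) = interval_mod (cosyz_seq a (Suc k)) (cosyz_seq a k)"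
  using strict
proof (induction k)
  case 0
  then show ?case using proj_eq[OF a] by simp
next
  case (Suc k)
  then have "(cosyz c ^^ Suc k) (proj c (a + 1)) =
      cosyz c (interval_mod (cosyz_seq a (Suc k)) (cosyz_seq a k))"
    by simp
  also have "\<dots> = interval_mod (cosyz_seq a (Suc (Suc k))) (cosyz_seq a (Suc k))"
    using Suc.prems cosyz_seq_le_n[OF a] cosyz_seq_Suc_le[OF a, of "Suc k"]
    by (simp add: cosyz_interval_mod)
  finally show ?case .
qed

lemma syz_iterate_inj:
  assumes s: "s \<le> n" and strict: "\<forall>j<k. syz_seq s j < syz_seq s (Suc j)"
  shows "(syz c ^^ k) (inj c s) = interval_mod (syz_seq s k) (syz_seq s (Suc k))"
  using strict
proof (induction k)
  case 0
  then show ?case using inj_eq[OF s] by simp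
next
  case (Suc k)
  then have "(syz c ^^ Suc k) (inj c s) = syz c (interval_mod (syz_seq s k) (syz_seq s (Suc k)))"
    by simp
  also have "\<dots> = interval_mod (syz_seq s (Suc k)) (syz_seq s (Suc (Suc k)))"
  proof -
    have "syz_seq s k < syz_seq s (Suc k)" using Suc.prems by simp
    moreover have "syz_seq s (Suc k) \<le> proj_end (syz_seq s k)"
      using syz_seq_le_Suc[OF s, of "Suc k"] by simp
    ultimately show ?thesis using syz_seq_le_n[OF s, of "Suc k"] by (simp add: syz_interval_mod)
  qed
  finally show ?case .
qed

lemma cosyz_iterate_proj_zero_iff:
  assumes a: "a < n"
  shows "Defs.is_zero ((cosyz c ^^ k) (proj c (a + 1))) \<longleftrightarrow>
    (\<exists>j\<le>k. cosyz_seq a (Suc j) = cosyz_seq a j)"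
proof (rule iterate_zero_iff_stalled[OF cosyz_zero])
  fix k assume "\<forall>j<k. cosyz_seq a (Suc j) \<noteq> cosyz_seq a j"
  then have "\<forall>j<k. cosyz_seq a (Suc j) < cosyz_seq a j"
    using cosyz_seq_Suc_le[OF a] by (simp add: order_less_le)
  then show "Defs.is_zero ((cosyz c ^^ k) (proj c (a + 1))) \<longleftrightarrow> cosyz_seq a (Suc k) = cosyz_seq a k"
    using cosyz_iterate_proj[OF a] cosyz_seq_Suc_le[OF a, of k] by auto
qed

lemma syz_iterate_inj_zero_iff:
  assumes s: "s \<le> n"
  shows "Defs.is_zero ((syz c ^^ k) (inj c s)) \<longleftrightarrow> (\<exists>j\<le>k. syz_seq s (Suc j) = syz_seq s j)"
proof (rule iterate_zero_iff_stalled[OF syz_zero])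
  fix k assume "\<forall>j<k. syz_seq s (Suc j) \<noteq> syz_seq s j"
  then have "\<forall>j<k. syz_seq s j < syz_seq s (Suc j)"
    using syz_seq_le_Suc[OF s] by (metis order_less_le)
  then show "Defs.is_zero ((syz c ^^ k) (inj c s)) \<longleftrightarrow> syz_seq s (Suc k) = syz_seq s k"
    using syz_iterate_inj[OF s] syz_seq_le_Suc[OF s, of k] by auto
qed

abbreviation coresol_len :: "nat \<Rightarrow> nat" where
  "coresol_len a \<equiv> last_coresol_index c (a + 1)"

abbreviation pdim_inj :: "nat \<Rightarrow> nat" where
  "pdim_inj s \<equiv> pdim c (inj c s)"

lemma coresol_len:
  assumes a: "a < n"
  shows "j \<le> coresol_len a \<Longrightarrow> cosyz_seq a (Suc j) < cosyz_seq a j"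
    and "cosyz_seq a (coresol_len a + 2) = cosyz_seq a (coresol_len a + 1)"
    and "Defs.is_zero ((cosyz c ^^ k) (proj c (a + 1))) \<longleftrightarrow> coresol_len a < k"
proof -
  let ?Z = "\<lambda>k. Defs.is_zero ((cosyz c ^^ k) (proj c (a + 1)))"
  have L: "coresol_len a = (LEAST k. ?Z (Suc k))" unfolding last_coresol_index_def by simp
  obtain m where m: "cosyz_seq a (Suc m) = cosyz_seq a m"
    using decreasing_stalls cosyz_seq_Suc_le[OF a] by blast
  have "cosyz_seq a 1 \<noteq> cosyz_seq a 0" using less_proj_end[OF a] by simp
  note stall = first_stall[of ?Z, OF cosyz_iterate_proj_zero_iff[OF a] this m, folded L]
  show "j \<le> coresol_len a \<Longrightarrow> cosyz_seq a (Suc j) < cosyz_seq a j"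
    using stall(2) cosyz_seq_Suc_le[OF a, of j] by (simp add: order_less_le)
  show "cosyz_seq a (coresol_len a + 2) = cosyz_seq a (coresol_len a + 1)"
    "?Z k \<longleftrightarrow> coresol_len a < k"
    using stall by simp_all
qed

lemma pdim_inj:
  assumes s: "1 \<le> s" "s \<le> n"
  shows "j \<le> pdim_inj s \<Longrightarrow> syz_seq s j < syz_seq s (Suc j)"
    and "syz_seq s (pdim_inj s + 2) = syz_seq s (pdim_inj s + 1)"
    and "pdim_inj s \<le> k \<longleftrightarrow> (\<exists>j\<le>Suc k. syz_seq s (Suc j) = syz_seq s j)"
proof -
  let ?Z = "\<lambda>k. Defs.is_zero ((syz c ^^ k) (inj c s))"
  have P: "pdim_inj s = (LEAST k. ?Z (Suc k))" unfolding pdim_def by simp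
  obtain m where m: "syz_seq s (Suc m) = syz_seq s m"
    using bounded_increasing_stalls syz_seq_le_Suc[OF s(2)] syz_seq_le_n[OF s(2)] by blast
  have "syz_seq s 1 \<noteq> syz_seq s 0" using inj_start_less[OF s] by simp
  note stall = first_stall[of ?Z, OF syz_iterate_inj_zero_iff[OF s(2)] this m, folded P]
  show "j \<le> pdim_inj s \<Longrightarrow> syz_seq s j < syz_seq s (Suc j)"
    using stall(2)[of j] syz_seq_le_Suc[OF s(2), of j] by simp
  show "syz_seq s (pdim_inj s + 2) = syz_seq s (pdim_inj s + 1)"
    using stall by simp
  show "pdim_inj s \<le> k \<longleftrightarrow> (\<exists>j\<le>Suc k. syz_seq s (Suc j) = syz_seq s j)"
    using stall(1)[of "Suc k"] syz_iterate_inj_zero_iff[OF s(2), of "Suc k"] by (metis less_Suc_eq_le)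
qed

lemma socle_cosyz_iterate_proj:
  assumes a: "a < n" and k: "k \<le> coresol_len a"
  shows "socle ((cosyz c ^^ k) (proj c (a + 1))) = cosyz_seq a k"
  using cosyz_iterate_proj[OF a] coresol_len(1)[OF a] socle_interval_mod k by simp

lemma inv_AR_map_eq: "a < n \<Longrightarrow> inv_AR_map c (a + 1) = cosyz_seq a (coresol_len a)"
  unfolding inv_AR_map_def using socle_cosyz_iterate_proj by simp

lemma cosyz_seq_coresol_len_bounds:
  "a < n \<Longrightarrow> 1 \<le> cosyz_seq a (coresol_len a) \<and> cosyz_seq a (coresol_len a) \<le> n"
  using coresol_len(1)[of a "coresol_len a"] cosyz_seq_le_n by fastforce

lemma AR_perm_eq:
  assumes s: "1 \<le> s" "s \<le> n"
  shows "AR_perm c s = syz_seq s (pdim_inj s) + 1"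
  unfolding AR_perm_def using syz_iterate_inj[OF s(2)] pdim_inj(1)[OF s] by (simp add: interval_mod_def)

lemma syz_seq_pdim_inj_less_n: "1 \<le> s \<Longrightarrow> s \<le> n \<Longrightarrow> syz_seq s (pdim_inj s) < n"
  using pdim_inj(1)[of s "pdim_inj s"] syz_seq_le_n[of s "Suc (pdim_inj s)"] by simp

definition regular_at :: "nat \<Rightarrow> bool" where
  "regular_at a \<longleftrightarrow> (\<forall>k\<le>coresol_len a. pdim_inj (cosyz_seq a k) \<le> k)"

lemma auslander_regular_iff: "auslander_regular n c \<longleftrightarrow> (\<forall>a<n. regular_at a)"
proof -
  have "auslander_regular n c \<longleftrightarrow>
    (\<forall>k. \<forall>a<n. \<not> Defs.is_zero ((cosyz c ^^ k) (proj c (a + 1))) \<longrightarrow>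
      pdim_inj (socle ((cosyz c ^^ k) (proj c (a + 1)))) \<le> k)"
    unfolding auslander_regular_def inj_coresol_term_def image_Suc_lessThan[symmetric] by auto
  also have "\<dots> \<longleftrightarrow> (\<forall>a<n. regular_at a)"
    unfolding regular_at_def using coresol_len(3) socle_cosyz_iterate_proj by (auto simp: not_less)
  finally show ?thesis .
qed

lemma cosyz_seq_le_syz_seq_iff:
  "b < n \<Longrightarrow> cosyz_seq b (i + 2) \<le> syz_seq s j \<longleftrightarrow> cosyz_seq b i \<le> syz_seq s (j + 2)"
  using inj_start_le_iff[OF cosyz_seq_le_n, of b i "syz_seq s j"] by (simp add: numeral_2_eq_2)

lemma syz_seq_less_cosyz_seq_iff:
  "b < n \<Longrightarrow> syz_seq s j < cosyz_seq b (i + 2) \<longleftrightarrow> syz_seq s (j + 2) < cosyz_seq b i"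
  using cosyz_seq_le_syz_seq_iff[of b i s j] by (simp add: not_le[symmetric])

lemma cosyz_seq_le_syz_seq_shift:
  assumes b: "b < n"
  shows "cosyz_seq b (i + 2 * m) \<le> syz_seq s j \<longleftrightarrow> cosyz_seq b i \<le> syz_seq s (j + 2 * m)"
proof (induction m arbitrary: j)
  case (Suc m)
  have e: "i + 2 * Suc m = (i + 2 * m) + 2" "j + 2 * Suc m = (j + 2) + 2 * m" by simp_all
  show ?case
    unfolding e using cosyz_seq_le_syz_seq_iff[OF b, of "i + 2 * m" s j] Suc.IH[of "j + 2"] by blast
qed simp

lemma syz_seq_shift_mono:
  "syz_seq s j \<le> syz_seq t i \<Longrightarrow> syz_seq s (j + 2 * m) \<le> syz_seq t (i + 2 * m)"
  by (induction m) (auto simp: proj_end_mono)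

lemma cosyz_seq_mono:
  assumes "a \<le> b" "b < n"
  shows "cosyz_seq a k \<le> cosyz_seq b k"
proof (induction k rule: nat_induct2)
  case 0
  then show ?case using assms by (simp add: proj_end_mono)
next
  case (step k)
  then show ?case using inj_start_mono cosyz_seq_le_n[OF assms(2)] by simp
qed (use assms in simp)

lemma cosyz_seq_even_eq:
  "proj_end a = proj_end b \<Longrightarrow> cosyz_seq a (2 * m) = cosyz_seq b (2 * m)"
  by (induction m) auto

text \<open>Interlacing of a cosyzygy sequence with a syzygy sequence: by the Galois connection,
  both inequalities below are invariant under moving j by two, so two consecutive instances
  give all of them.\<close>

lemma cosyz_seq_le_syz_seq_interlaced:
  assumes b: "b < n" and i: "i \<le> N" and j: "j \<le> N + 1"
    and base: "cosyz_seq b (N + 1 - i) \<le> syz_seq s i" "cosyz_seq b (N - i) \<le> syz_seq s (Suc i)"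
  shows "cosyz_seq b (N + 1 - j) \<le> syz_seq s j"
proof (rule parity_propagate[where P = "\<lambda>j. cosyz_seq b (N + 1 - j) \<le> syz_seq s j" and i = i])
  fix j assume "j + 2 \<le> N + 1"
  then have e: "N + 1 - j = (N + 1 - (j + 2)) + 2" by simp
  show "cosyz_seq b (N + 1 - (j + 2)) \<le> syz_seq s (j + 2) \<longleftrightarrow> cosyz_seq b (N + 1 - j) \<le> syz_seq s j"
    unfolding e using cosyz_seq_le_syz_seq_iff[OF b] by blast
qed (use i j base in simp_all)

lemma syz_seq_less_cosyz_seq_interlaced:
  assumes b: "b < n" and i: "i < N" and j: "j \<le> N"
    and base: "syz_seq s i < cosyz_seq b (N - i)" "syz_seq s (Suc i) < cosyz_seq b (N - Suc i)"
  shows "syz_seq s j < cosyz_seq b (N - j)"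
proof (rule parity_propagate[where P = "\<lambda>j. syz_seq s j < cosyz_seq b (N - j)" and i = i])
  fix j assume "j + 2 \<le> N"
  then have e: "N - j = (N - (j + 2)) + 2" by simp
  show "syz_seq s (j + 2) < cosyz_seq b (N - (j + 2)) \<longleftrightarrow> syz_seq s j < cosyz_seq b (N - j)"
    unfolding e using syz_seq_less_cosyz_seq_iff[OF b] by blast
qed (use i j base in simp_all)

lemma less_pdim_inj_if_strict:
  assumes s: "1 \<le> s" "s \<le> n" and strict: "\<And>j. j \<le> Suc k \<Longrightarrow> syz_seq s j < syz_seq s (Suc j)"
  shows "k < pdim_inj s"
  using pdim_inj(3)[OF s, of k] strict by (auto simp: not_le dest: less_not_refl2)

lemma less_pdim_inj_if_rejoined:
  assumes a: "a < n" and b: "b < n" and k: "Suc k \<le> coresol_len a"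
    and above: "cosyz_seq a k < cosyz_seq b k"
    and rejoin: "cosyz_seq b (k + 1) = cosyz_seq a (k + 1)" "cosyz_seq b (k + 2) = cosyz_seq a (k + 2)"
  shows "k < pdim_inj (cosyz_seq a k)"
proof -
  let ?q = "cosyz_seq a k"
  have q: "1 \<le> ?q" "?q \<le> n"
    using coresol_len(1)[OF a, of k] k cosyz_seq_le_n[OF a] by auto
  have strict: "cosyz_seq a (k + 2) < cosyz_seq a (k + 1)" "cosyz_seq a (k + 1) \<le> ?q"
    using coresol_len(1)[OF a, of "Suc k"] k cosyz_seq_Suc_le[OF a, of k] by auto
  have lower: "cosyz_seq b (k + 2 - j) \<le> syz_seq ?q j" if "j \<le> k + 2" for j
    using cosyz_seq_le_syz_seq_interlaced[OF b, of 0 "k + 1" j ?q] that rejoin strict by simp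
  have upper: "syz_seq ?q j < cosyz_seq b (k + 1 - j)" if "j \<le> k + 1" for j
    using syz_seq_less_cosyz_seq_interlaced[OF b, of 0 "k + 1" j ?q] that rejoin strict above by simp
  show ?thesis
  proof (rule less_pdim_inj_if_strict[OF q])
    fix j assume "j \<le> Suc k"
    then show "syz_seq ?q j < syz_seq ?q (Suc j)"
      using upper[of j] lower[of "Suc j"] by simp
  qed
qed

text \<open>Read backwards, the syzygy sequence of I(s) interlaces the cosyzygy sequence of
  P(psi(s)), which therefore cannot stall before the projective dimension of I(s).\<close>

lemma inv_AR_map_AR_perm_le:
  assumes s: "1 \<le> s" "s \<le> n"
  shows "inv_AR_map c (AR_perm c s) \<le> s"
proof -
  let ?K = "pdim_inj s" and ?x = "syz_seq s"
  define b where "b = ?x ?K"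
  have b: "b < n" using syz_seq_pdim_inj_less_n[OF s] b_def by simp
  let ?z = "cosyz_seq b"
  have z0: "proj_end b = ?x (Suc ?K)"
    using pdim_inj(2)[OF s] b_def by simp
  have lower: "?z (?K + 1 - j) \<le> ?x j" if "j \<le> ?K + 1" for j
    using cosyz_seq_le_syz_seq_interlaced[OF b, of ?K ?K j s] that z0 b_def by simp
  have upper: "?x j < ?z (?K - j)" if "j \<le> ?K" for j
  proof (cases ?K)
    case 0
    then show ?thesis using that z0 pdim_inj(1)[OF s, of 0] by simp
  next
    case (Suc K')
    have "?x K' < ?x ?K" "?x ?K < ?x (Suc ?K)"
      using pdim_inj(1)[OF s, of K'] pdim_inj(1)[OF s, of ?K] Suc by simp_all
    then show ?thesis
      using syz_seq_less_cosyz_seq_interlaced[OF b, of K' ?K j s] that z0 b_def Suc by simp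
  qed
  have "?z (Suc j) < ?z j" if "j \<le> ?K" for j
  proof -
    have "?z (Suc j) \<le> ?x (?K - j)" using lower[of "?K - j"] that by (simp add: Suc_diff_le)
    also have "\<dots> < ?z j" using upper[of "?K - j"] that by simp
    finally show ?thesis .
  qed
  then have "?K \<le> coresol_len b"
    using coresol_len(2)[OF b] by (metis not_less_eq_eq Suc_eq_plus1 add_2_eq_Suc' less_irrefl)
  then have "inv_AR_map c (b + 1) \<le> ?z ?K"
    using inv_AR_map_eq[OF b] cosyz_seq_antimono[OF b] by simp
  also have "\<dots> \<le> s" using lower[of 1] by simp
  finally show ?thesis using AR_perm_eq[OF s] b_def by simp
qed

end

locale nakayama_vertex = linear_nakayama +
  fixes a :: nat
  assumes a_less: "a < n"
begin

text \<open>sa is the vertex sigma(a+1), and xa the endpoint sequence of the syzygies of I(sa).\<close>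

abbreviation "La \<equiv> coresol_len a"
abbreviation "ya \<equiv> cosyz_seq a"
abbreviation "sa \<equiv> cosyz_seq a La"
abbreviation "xa \<equiv> syz_seq sa"

lemma sa_bounds: "1 \<le> sa" "sa \<le> n"
  using cosyz_seq_coresol_len_bounds[OF a_less] by auto

lemma ya_strict: "j \<le> La \<Longrightarrow> ya (Suc j) < ya j"
  using coresol_len(1)[OF a_less] .

lemma xa_0: "xa 0 = ya (La + 1)"
  using coresol_len(2)[OF a_less] by simp

lemma xa_interlaced:
  shows "j \<le> La + 1 \<Longrightarrow> ya (La + 1 - j) \<le> xa j" and "j \<le> La \<Longrightarrow> xa j < ya (La - j)"
proof -
  show "j \<le> La + 1 \<Longrightarrow> ya (La + 1 - j) \<le> xa j"
    using cosyz_seq_le_syz_seq_interlaced[OF a_less, of 0 La j sa] xa_0 by simp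
  show "xa j < ya (La - j)" if "j \<le> La"
  proof (cases La)
    case 0
    then show ?thesis using that xa_0 ya_strict[of 0] by simp
  next
    case (Suc L')
    then show ?thesis
      using syz_seq_less_cosyz_seq_interlaced[OF a_less, of 0 La j sa] that xa_0
        ya_strict[of La] ya_strict[of L'] by simp
  qed
qed

lemma xa_Suc_La: "xa (La + 1) = ya 0"
proof (rule antisym)
  show "xa (La + 1) \<le> ya 0"
  proof (cases La)
    case (Suc L')
    have "xa L' < ya 1" using xa_interlaced(2)[of L'] Suc by simp
    then show ?thesis using Suc proj_end_mono by simp
  qed simp
qed (use xa_interlaced(1)[of "La + 1"] in simp)

lemma xa_strict: "j \<le> La \<Longrightarrow> xa j < xa (Suc j)"
  using xa_interlaced(2)[of j] xa_interlaced(1)[of "Suc j"] by simp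

lemma La_le_pdim_inj: "La \<le> pdim_inj sa"
proof (cases La)
  case (Suc L')
  then show ?thesis using less_pdim_inj_if_strict[OF sa_bounds, of L'] xa_strict by simp
qed simp

lemma a_le_xa_La: "a \<le> xa La"
  using xa_interlaced(1)[of La] by simp

lemma xa_La_less_n: "xa La < n"
  using xa_interlaced(2)[of La] proj_end_le_n[of a] by simp

lemma AR_perm_sa_iff: "AR_perm c sa = a + 1 \<longleftrightarrow> xa La = a"
proof
  assume xL: "xa La = a"
  then have "xa (Suc (Suc La)) = xa (Suc La)" using xa_Suc_La by simp
  then have "pdim_inj sa \<le> La" using pdim_inj(3)[OF sa_bounds, of La] by blast
  then show "AR_perm c sa = a + 1"
    using La_le_pdim_inj AR_perm_eq[OF sa_bounds] xL by simp
next
  assume "AR_perm c sa = a + 1"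
  then have "xa (pdim_inj sa) = a" using AR_perm_eq[OF sa_bounds] by simp
  then show "xa La = a"
    using syz_seq_mono[OF sa_bounds(2) La_le_pdim_inj] a_le_xa_La by simp
qed

lemma regular_at_if_xa_La:
  assumes xL: "xa La = a"
  shows "regular_at a"
  unfolding regular_at_def
proof (intro allI impI)
  fix k assume k: "k \<le> La"
  show "pdim_inj (ya k) \<le> k"
  proof (cases "k = La")
    case True
    have "xa (Suc (Suc La)) = xa (Suc La)" using xL xa_Suc_La by simp
    then show ?thesis using True pdim_inj(3)[OF sa_bounds, of La] by blast
  next
    case False
    let ?w = "syz_seq (ya k)"
    have q: "1 \<le> ya k" "ya k \<le> n" using ya_strict[OF k] cosyz_seq_le_n[OF a_less] by auto
    define r where "r = k mod 2"
    define M where "M = k div 2"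
    have kM: "k = r + 2 * M" "r \<le> 1" unfolding r_def M_def by simp_all
    have xa_r: "xa (La + 1 - r) = ya r"
      using kM(2) xa_Suc_La xL by (cases r) auto
    \<comment> \<open>the syzygy sequence of I(ya k) is squeezed to ya r at positions 1 + 2M and 2 + 2M\<close>
    have "ya r \<le> ?w (1 + 2 * M)"
      using cosyz_seq_le_syz_seq_shift[OF a_less, of r M "ya k" 1] kM by simp
    moreover have "?w (Suc (1 + 2 * M)) \<le> ya r"
    proof -
      have "?w 0 \<le> xa (La + 1 - (k + 2))"
        using xa_interlaced(1)[of "La + 1 - (k + 2)"] k False by simp
      then have "?w (0 + 2 * Suc M) \<le> xa (La + 1 - (k + 2) + 2 * Suc M)"
        by (rule syz_seq_shift_mono)
      moreover have "0 + 2 * Suc M = Suc (1 + 2 * M)" "La + 1 - (k + 2) + 2 * Suc M = La + 1 - r"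
        using kM k False by simp_all
      ultimately show ?thesis using xa_r by metis
    qed
    ultimately have "?w (Suc (1 + 2 * M)) = ?w (1 + 2 * M)"
      using syz_seq_le_Suc[OF q(2), of "1 + 2 * M"] by simp
    moreover have "1 + 2 * M \<le> Suc k" using kM by simp
    ultimately show ?thesis using pdim_inj(3)[OF q, of k] by blast
  qed
qed

text \<open>If b = xa La exceeds a, the cosyzygy sequence of P(b+1) starts above that of P(a+1)
  and has rejoined it by position La + 1; at the odd position k just before the first odd
  position where it rejoins, I(ya k) has projective dimension greater than k.\<close>

lemma xa_La_if_regular_at:
  assumes reg: "regular_at a"
  shows "xa La = a"
proof (rule ccontr)
  assume "xa La \<noteq> a"
  define b where "b = xa La"
  have ab: "a < b" "b < n" using a_le_xa_La xa_La_less_n \<open>xa La \<noteq> a\<close> b_def by auto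
  let ?z = "cosyz_seq b"
  have "pdim_inj sa \<le> La" using reg unfolding regular_at_def by simp
  then obtain j where "j \<le> Suc La" "xa (Suc j) = xa j" using pdim_inj(3)[OF sa_bounds] by blast
  then have "xa (Suc (Suc La)) = xa (Suc La)" using xa_strict by (metis le_Suc_eq less_irrefl)
  then have same_end: "proj_end b = proj_end a" using xa_Suc_La b_def by simp
  have above: "ya j \<le> ?z j" for j using cosyz_seq_mono ab by simp
  have even: "?z (2 * m) = ya (2 * m)" for m using cosyz_seq_even_eq[OF same_end] by simp
  have "?z (La + 1 - j) \<le> xa j" if "j \<le> La + 1" for j
    using cosyz_seq_le_syz_seq_interlaced[OF ab(2), of La La j sa] that same_end b_def xa_Suc_La
    by simp
  from this[of 1] this[of 0] have end_eq: "?z La = ya La" "?z (La + 1) = ya (La + 1)"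
    using above[of La] above[of "La + 1"] xa_0 by simp_all
  obtain M where M: "?z (2 * M + 1) = ya (2 * M + 1)" "2 * M + 1 \<le> La + 1"
    using end_eq by (cases "even La") (auto elim!: evenE oddE)
  obtain m where m: "m < M" "?z (2 * m + 1) \<noteq> ya (2 * m + 1)"
      "?z (2 * Suc m + 1) = ya (2 * Suc m + 1)"
    using ex_least_nat_less[of "\<lambda>m. ?z (2 * m + 1) = ya (2 * m + 1)" M] M(1) ab(1) by auto
  let ?k = "2 * m + 1"
  have "?k < pdim_inj (ya ?k)"
  proof (rule less_pdim_inj_if_rejoined[OF a_less ab(2)])
    show "Suc ?k \<le> La" using m(1) M(2) by simp
    show "ya ?k < ?z ?k" using m(2) above[of ?k] by simp
    show "?z (?k + 1) = ya (?k + 1)" using even[of "Suc m"] by simp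
    show "?z (?k + 2) = ya (?k + 2)" using m(3) by (simp add: algebra_simps)
  qed
  moreover have "?k \<le> La" using m(1) M(2) by simp
  ultimately show False using reg unfolding regular_at_def by (meson not_le)
qed

end

context linear_nakayama
begin

lemma regular_at_iff_AR_perm_inv_AR_map:
  assumes a: "a < n"
  shows "regular_at a \<longleftrightarrow> AR_perm c (inv_AR_map c (a + 1)) = a + 1"
proof -
  interpret nakayama_vertex n c a using a by unfold_locales
  show ?thesis
    using inv_AR_map_eq[OF a] AR_perm_sa_iff regular_at_if_xa_La xa_La_if_regular_at by auto
qed

lemma auslander_regular_iff_AR_perm_inv_AR_map:
  "auslander_regular n c \<longleftrightarrow> (\<forall>r\<in>{1..n}. AR_perm c (inv_AR_map c r) = r)"
  unfolding auslander_regular_iff image_Suc_lessThan[symmetric]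
  using regular_at_iff_AR_perm_inv_AR_map by auto

lemma inv_AR_map_range: "r \<in> {1..n} \<Longrightarrow> inv_AR_map c r \<in> {1..n}"
  using inv_AR_map_eq[of "r - 1"] cosyz_seq_coresol_len_bounds[of "r - 1"] by auto

lemma bij_inv_AR_map_if_AR_perm_inv_AR_map:
  assumes "\<forall>r\<in>{1..n}. AR_perm c (inv_AR_map c r) = r"
  shows "bij_betw (inv_AR_map c) {1..n} {1..n}"
proof -
  have "inj_on (inv_AR_map c) {1..n}" using assms by (metis inj_onI)
  moreover have "inv_AR_map c ` {1..n} \<subseteq> {1..n}" using inv_AR_map_range by auto
  ultimately show ?thesis unfolding bij_betw_def using endo_inj_surj by blast
qed

end

lemma index_mult_mat_sum:
  assumes "A \<in> carrier_mat n m" "B \<in> carrier_mat m k" "i < n" "j < k"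
  shows "(A * B) $$ (i, j) = (\<Sum>l<m. A $$ (i, l) * B $$ (l, j))"
  using assms by (auto simp: scalar_prod_def atLeast0LessThan intro: sum.cong)

lemma alternating_sum_telescope:
  fixes h :: "nat \<Rightarrow> 'a::comm_ring_1"
  shows "(\<Sum>k\<le>L. (-1) ^ k * (h k - h (k + 2))) = h 0 - h 1 + (-1) ^ L * (h (L + 1) - h (L + 2))"
  by (induction L) (simp_all add: algebra_simps numeral_2_eq_2)

definition alternating_rows_mat ::
  "nat \<Rightarrow> (nat \<Rightarrow> nat) \<Rightarrow> (nat \<Rightarrow> nat \<Rightarrow> nat) \<Rightarrow> real mat" where
  "alternating_rows_mat n K u = mat n n (\<lambda>(i, l). \<Sum>k\<le>K i. (-1) ^ k * (if l = u i k then 1 else 0))"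

lemma alternating_rows_mat_carrier [simp]: "alternating_rows_mat n K u \<in> carrier_mat n n"
  unfolding alternating_rows_mat_def by simp

lemma dim_alternating_rows_mat [simp]:
  "dim_row (alternating_rows_mat n K u) = n" "dim_col (alternating_rows_mat n K u) = n"
  unfolding alternating_rows_mat_def by simp_all

lemma alternating_rows_mat_mult_index:
  assumes u: "\<And>k. k \<le> K i \<Longrightarrow> u i k < n" and B: "B \<in> carrier_mat n m" and i: "i < n" and j: "j < m"
  shows "(alternating_rows_mat n K u * B) $$ (i, j) = (\<Sum>k\<le>K i. (-1) ^ k * B $$ (u i k, j))"
proof -
  have "(alternating_rows_mat n K u * B) $$ (i, j) =
      (\<Sum>l<n. \<Sum>k\<le>K i. (-1) ^ k * (if l = u i k then B $$ (l, j) else 0))"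
    using index_mult_mat_sum[OF alternating_rows_mat_carrier B i j] i
    unfolding alternating_rows_mat_def by (auto simp: sum_distrib_right intro!: sum.cong)
  also have "\<dots> = (\<Sum>k\<le>K i. \<Sum>l<n. (-1) ^ k * (if l = u i k then B $$ (l, j) else 0))"
    by (rule sum.swap)
  also have "\<dots> = (\<Sum>k\<le>K i. (-1) ^ k * B $$ (u i k, j))"
    using u by (intro sum.cong) (simp_all add: sum_distrib_left[symmetric] sum.delta)
  finally show ?thesis .
qed

lemma invertible_mat_iff_det_nonzero:
  fixes A :: "'a::field mat"
  assumes A: "A \<in> carrier_mat n n"
  shows "invertible_mat A \<longleftrightarrow> det A \<noteq> 0"
proof
  assume "invertible_mat A"
  then obtain B where AB: "A * B = 1\<^sub>m n" and BA: "B * A = 1\<^sub>m (dim_row B)"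
    using A unfolding invertible_mat_def inverts_mat_def by auto
  then have B: "B \<in> carrier_mat n n"
    using A by (metis carrier_matD carrier_matI index_mult_mat(2,3) index_one_mat(2,3))
  have "det A * det B = 1" using det_mult[OF A B] AB by simp
  then show "det A \<noteq> 0" by auto
next
  assume "det A \<noteq> 0"
  then have "A \<in> Units (ring_mat TYPE('a) n ())" using det_non_zero_imp_unit[OF A] by simp
  then obtain B where "B \<in> carrier_mat n n" "B * A = 1\<^sub>m n" "A * B = 1\<^sub>m n"
    unfolding Units_def ring_mat_def by auto
  then show "invertible_mat A" using A unfolding invertible_mat_def inverts_mat_def by auto
qed

lemma upper_triangular_invertible_iff:
  fixes A :: "'a::field mat"
  assumes A: "A \<in> carrier_mat n n" and ut: "upper_triangular A"
  shows "invertible_mat A \<longleftrightarrow> (\<forall>j<n. A $$ (j, j) \<noteq> 0)"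
  using invertible_mat_iff_det_nonzero[OF A] upper_triangular_imp_det_eq_0_iff[OF A ut] A
  by (auto simp: diag_mat_def)

lemma perm_matrix_carrier [simp]: "perm_matrix n p \<in> carrier_mat n n"
  unfolding perm_matrix_def by simp

lemma dim_perm_matrix [simp]: "dim_row (perm_matrix n p) = n" "dim_col (perm_matrix n p) = n"
  unfolding perm_matrix_def by simp_all

lemma perm_matrix_mult_index:
  assumes p: "p permutes {0..<n}" and B: "B \<in> carrier_mat n m" and j: "j < n" and l: "l < m"
  shows "(perm_matrix n p * B) $$ (p j, l) = B $$ (j, l)"
proof -
  have pj: "p j < n" using permutes_in_image[OF p] j by simp
  have "(perm_matrix n p * B) $$ (p j, l) = (\<Sum>k<n. perm_matrix n p $$ (p j, k) * B $$ (k, l))"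
    using index_mult_mat_sum[OF perm_matrix_carrier B pj l] .
  also have "\<dots> = (\<Sum>k<n. if k = j then B $$ (k, l) else 0)"
    using pj inj_eq[OF permutes_inj[OF p]] by (intro sum.cong) (auto simp: perm_matrix_def)
  finally show ?thesis using j by simp
qed

lemma mult_perm_matrix_index:
  assumes p: "p permutes {0..<n}" and A: "A \<in> carrier_mat m n" and i: "i < m" and b: "b < n"
  shows "(A * perm_matrix n p) $$ (i, b) = A $$ (i, p b)"
proof -
  have pb: "p b < n" using permutes_in_image[OF p] b by simp
  have "(A * perm_matrix n p) $$ (i, b) = (\<Sum>k<n. A $$ (i, k) * perm_matrix n p $$ (k, b))"
    using index_mult_mat_sum[OF A perm_matrix_carrier i b] .
  also have "\<dots> = (\<Sum>k<n. if k = p b then A $$ (i, k) else 0)"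
    using b by (intro sum.cong) (auto simp: perm_matrix_def)
  finally show ?thesis using pb by simp
qed

definition leading_cols :: "'a::zero mat \<Rightarrow> (nat \<Rightarrow> nat) \<Rightarrow> bool" where
  "leading_cols M f \<longleftrightarrow>
     (\<forall>i<dim_row M. f i < dim_col M \<and> M $$ (i, f i) \<noteq> 0 \<and> (\<forall>j<f i. M $$ (i, j) = 0))"

lemma leading_cols_uminus [simp]:
  fixes M :: "'a::group_add mat"
  shows "leading_cols (- M) f \<longleftrightarrow> leading_cols M f"
  unfolding leading_cols_def by auto

lemma leading_cols_perm_mult:
  fixes U :: "real mat"
  assumes lead: "leading_cols (perm_matrix n p * U) f" and p: "p permutes {0..<n}"
    and U: "U \<in> carrier_mat n n" "upper_triangular U" "invertible_mat U" and j: "j < n"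
  shows "f (p j) = j"
proof -
  have pj: "p j < n" using permutes_in_image[OF p] j by simp
  have row: "(perm_matrix n p * U) $$ (p j, l) = U $$ (j, l)" if "l < n" for l
    using perm_matrix_mult_index[OF p U(1) j that] .
  have f: "f (p j) < n" "U $$ (j, f (p j)) \<noteq> 0" "\<And>l. l < f (p j) \<Longrightarrow> U $$ (j, l) = 0"
    using lead pj U(1) row unfolding leading_cols_def by auto
  have "\<not> f (p j) < j" using f(2) upper_triangularD[OF U(2), of "f (p j)" j] U(1) j by auto
  moreover have "\<not> j < f (p j)"
    using f(3)[of j] upper_triangular_invertible_iff[OF U(1,2)] U(3) j by auto
  ultimately show ?thesis by simp
qed

lemma perm_mult_upper_triangular_if_leading_cols:
  fixes M :: "real mat"
  assumes M: "M \<in> carrier_mat n n" and lead: "leading_cols M f"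
    and f: "bij_betw f {0..<n} {0..<n}"
  obtains p U where "p permutes {0..<n}" "\<And>j. j < n \<Longrightarrow> f (p j) = j"
    "U \<in> carrier_mat n n" "upper_triangular U" "invertible_mat U" "M = perm_matrix n p * U"
proof -
  define p where "p j = (if j < n then inv_into {0..<n} f j else j)" for j
  have bij_p: "bij_betw p {0..<n} {0..<n}"
    using bij_betw_inv_into[OF f] unfolding p_def by (rule bij_betw_cong[THEN iffD1, rotated]) auto
  then have p: "p permutes {0..<n}" by (rule bij_imp_permutes) (auto simp: p_def)
  have fp: "f (p j) = j" if "j < n" for j
    using f that unfolding p_def by (simp add: bij_betw_def f_inv_into_f)
  have pf: "p (f i) = i" if "i < n" for i
    using f that unfolding p_def bij_betw_def by (auto simp: inv_into_f_f)
  have p_less: "p j < n" if "j < n" for j using bij_p that unfolding bij_betw_def by auto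
  define U where "U = mat n n (\<lambda>(j, l). M $$ (p j, l))"
  have U: "U \<in> carrier_mat n n" unfolding U_def by simp
  have lead_p: "M $$ (p j, j) \<noteq> 0" "\<And>l. l < j \<Longrightarrow> M $$ (p j, l) = 0" if "j < n" for j
    using lead p_less[OF that] fp[OF that] M unfolding leading_cols_def by auto
  have ut: "upper_triangular U"
    using lead_p unfolding U_def by (intro upper_triangularI) auto
  moreover have "invertible_mat U"
    using upper_triangular_invertible_iff[OF U ut] lead_p unfolding U_def by simp
  moreover have "M = perm_matrix n p * U"
  proof (rule eq_matI)
    fix i l assume "i < dim_row (perm_matrix n p * U)" "l < dim_col (perm_matrix n p * U)"
    then have il: "i < n" "l < n" using U by auto
    have fi: "f i < n" using f il(1) unfolding bij_betw_def by auto
    have "(perm_matrix n p * U) $$ (i, l) = U $$ (f i, l)"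
      using perm_matrix_mult_index[OF p U fi il(2)] pf[OF il(1)] by simp
    then show "M $$ (i, l) = (perm_matrix n p * U) $$ (i, l)"
      using pf[OF il(1)] fi il unfolding U_def by simp
  qed (use M U in auto)
  ultimately show ?thesis using that p fp U by blast
qed

lemma sum_upper_triangular_col:
  fixes U :: "'a::field mat"
  assumes U: "U \<in> carrier_mat n n" "upper_triangular U" and l: "l < n"
    and w: "\<And>b. b < l \<Longrightarrow> w b = 0"
  shows "(\<Sum>b<n. w b * U $$ (b, l)) = w l * U $$ (l, l)"
proof -
  have "w b * U $$ (b, l) = (if b = l then w l * U $$ (l, l) else 0)" if "b \<in> {..<n}" for b
  proof (cases b l rule: linorder_cases)
    case greater
    then show ?thesis using upper_triangularD[OF U(2) greater] U(1) that by simp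
  qed (use w in simp_all)
  then have "(\<Sum>b<n. w b * U $$ (b, l)) = (\<Sum>b<n. if b = l then w l * U $$ (l, l) else 0)"
    by (rule sum.cong[OF refl])
  then show ?thesis using l by simp
qed

lemma upper_triangular_row_solve_zero:
  fixes U :: "'a::field mat"
  assumes U: "U \<in> carrier_mat n n" "upper_triangular U" "invertible_mat U" and a: "a < n"
    and row: "\<And>l. l < a \<Longrightarrow> (\<Sum>b<n. w b * U $$ (b, l)) = 0"
  shows "b < a \<Longrightarrow> w b = 0"
proof (induction b rule: less_induct)
  case (less b)
  then have "w b * U $$ (b, b) = 0"
    using sum_upper_triangular_col[OF U(1,2), of b w] row[of b] a by simp
  then show ?case using upper_triangular_invertible_iff[OF U(1,2)] U(3) less.prems a by simp
qed

lemma permutes_eq_if_le: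
  fixes p q :: "nat \<Rightarrow> nat"
  assumes p: "p permutes {0..<n}" and q: "q permutes {0..<n}" and le: "\<And>a. a < n \<Longrightarrow> q a \<le> p a"
    and a: "a < n"
  shows "p a = q a"
proof (rule ccontr)
  assume "p a \<noteq> q a"
  then have "\<exists>x\<in>{0..<n}. q x < p x" using le[OF a] a by (intro bexI[of _ a]) auto
  then have "(\<Sum>a\<in>{0..<n}. q a) < (\<Sum>a\<in>{0..<n}. p a)"
    using le by (intro sum_strict_mono_ex1) auto
  moreover have "(\<Sum>a\<in>{0..<n}. q a) = (\<Sum>a\<in>{0..<n}. p a)"
    using sum.permute[OF p, of id] sum.permute[OF q, of id] by simp
  ultimately show False by simp
qed

lemma bruhat_perm_unique:
  fixes U0 U1 U2 :: "real mat"
  assumes U1: "U1 \<in> carrier_mat n n" "upper_triangular U1"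
    and U2: "U2 \<in> carrier_mat n n" "upper_triangular U2" "invertible_mat U2"
    and U0: "U0 \<in> carrier_mat n n" "upper_triangular U0" "invertible_mat U0"
    and p: "p permutes {0..<n}" and q: "q permutes {0..<n}"
    and eq: "U1 * perm_matrix n p * U2 = perm_matrix n q * U0" and a: "a < n"
  shows "p a = q a"
proof (rule permutes_eq_if_le[OF p q _ a])
  fix a assume a: "a < n"
  have qa: "q a < n" using permutes_in_image[OF q] a by simp
  let ?w = "\<lambda>b. U1 $$ (q a, p b)"
  have row: "(\<Sum>b<n. ?w b * U2 $$ (b, l)) = U0 $$ (a, l)" if "l < n" for l
  proof -
    have "(\<Sum>b<n. ?w b * U2 $$ (b, l)) = (U1 * perm_matrix n p * U2) $$ (q a, l)"
      using index_mult_mat_sum[OF mult_carrier_mat[OF U1(1) perm_matrix_carrier] U2(1) qa that]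
        mult_perm_matrix_index[OF p U1(1) qa] by simp
    also have "\<dots> = U0 $$ (a, l)" using eq perm_matrix_mult_index[OF q U0(1) a that] by simp
    finally show ?thesis .
  qed
  have "?w b = 0" if "b < a" for b
  proof (rule upper_triangular_row_solve_zero[OF U2 a _ that])
    fix l assume "l < a"
    then show "(\<Sum>b<n. ?w b * U2 $$ (b, l)) = 0" using row[of l] U0(1,2) a by auto
  qed
  then have "?w a * U2 $$ (a, a) = U0 $$ (a, a)"
    using sum_upper_triangular_col[OF U2(1,2) a] row[OF a] by simp
  then have "?w a \<noteq> 0" using upper_triangular_invertible_iff[OF U0(1,2)] U0(3) a by auto
  then show "q a \<le> p a"
    using upper_triangularD[OF U1(2), of "p a" "q a"] U1(1) qa by force
qed

context linear_nakayama
begin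

lemma cartan_carrier [simp]: "cartan n c \<in> carrier_mat n n"
  unfolding cartan_def by simp

lemma dim_cartan [simp]: "dim_row (cartan n c) = n" "dim_col (cartan n c) = n"
  unfolding cartan_def by simp_all

lemma cartan_index:
  "i < n \<Longrightarrow> j < n \<Longrightarrow> cartan n c $$ (i, j) = (if j \<le> i \<and> i < proj_end j then 1 else 0)"
  unfolding cartan_def proj_end_def by simp

abbreviation cartan_inv :: "real mat" where
  "cartan_inv \<equiv> the (mat_inverse (cartan n c))"

lemma cartan_inv:
  "cartan_inv \<in> carrier_mat n n" "cartan n c * cartan_inv = 1\<^sub>m n" "cartan_inv * cartan n c = 1\<^sub>m n"
proof -
  have ut: "upper_triangular (cartan n c)\<^sup>T"
    using cartan_index by (intro upper_triangularI) auto
  have "det (cartan n c)\<^sup>T \<noteq> 0"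
    using upper_triangular_imp_det_eq_0_iff[OF _ ut, of n] cartan_index less_proj_end
    by (auto simp: diag_mat_def)
  then have "cartan n c \<in> Units (ring_mat TYPE(real) n ())"
    using det_non_zero_imp_unit[OF cartan_carrier] det_transpose[OF cartan_carrier] by simp
  then have "mat_inverse (cartan n c) \<noteq> None" using mat_inverse(1)[OF cartan_carrier, of "()"] by blast
  then obtain B where "mat_inverse (cartan n c) = Some B" by auto
  then show "cartan_inv \<in> carrier_mat n n" "cartan n c * cartan_inv = 1\<^sub>m n"
    "cartan_inv * cartan n c = 1\<^sub>m n"
    using mat_inverse(2)[OF cartan_carrier] by auto
qed

text \<open>Rows of cosyz_mat are the alternating sums of the (zero-based) socles of the cosyzygies of
  P(i+1), rows of syz_mat those of the tops of the syzygies of I(s+1).\<close>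

abbreviation cosyz_mat :: "real mat" where
  "cosyz_mat \<equiv> alternating_rows_mat n coresol_len (\<lambda>i k. cosyz_seq i k - 1)"

abbreviation syz_mat :: "real mat" where
  "syz_mat \<equiv> alternating_rows_mat n (\<lambda>s. pdim_inj (s + 1)) (\<lambda>s. syz_seq (s + 1))"

lemma cosyz_mat_mult_cartan: "cosyz_mat * cartan n c = (cartan n c)\<^sup>T"
proof (rule eq_matI)
  fix i j assume "i < dim_row (cartan n c)\<^sup>T" "j < dim_col (cartan n c)\<^sup>T"
  then have ij: "i < n" "j < n" by auto
  let ?y = "cosyz_seq i" and ?L = "coresol_len i"
  let ?above = "\<lambda>k. if j < ?y k then 1 else 0 :: real"
  have y: "1 \<le> ?y k" "?y k \<le> n" if "k \<le> ?L" for k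
    using coresol_len(1)[OF ij(1) that] cosyz_seq_le_n[OF ij(1)] by auto
  have "?y k - 1 < n" if "k \<le> ?L" for k using y[OF that] by simp
  then have "(cosyz_mat * cartan n c) $$ (i, j) = (\<Sum>k\<le>?L. (-1) ^ k * cartan n c $$ (?y k - 1, j))"
    using ij by (intro alternating_rows_mat_mult_index) auto
  also have "\<dots> = (\<Sum>k\<le>?L. (-1) ^ k * (?above k - ?above (k + 2)))"
  proof (intro sum.cong refl)
    fix k assume "k \<in> {..?L}"
    then have "cartan n c $$ (?y k - 1, j) = (if j < ?y k \<and> ?y k \<le> proj_end j then 1 else 0)"
      using cartan_index[of "?y k - 1" j] y[of k] ij by auto
    also have "\<dots> = ?above k - ?above (k + 2)"
      using inj_start_le_iff[OF cosyz_seq_le_n[OF ij(1)], of k j]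
        cosyz_seq_antimono[OF ij(1), of k "k + 2"] by auto
    finally show "(-1) ^ k * cartan n c $$ (?y k - 1, j) = (-1) ^ k * (?above k - ?above (k + 2))"
      by simp
  qed
  also have "\<dots> = ?above 0 - ?above 1"
    using alternating_sum_telescope[of ?above ?L] coresol_len(2)[OF ij(1)] by simp
  also have "\<dots> = (cartan n c)\<^sup>T $$ (i, j)"
    using cartan_index[of j i] ij less_proj_end[OF ij(1)] by auto
  finally show "(cosyz_mat * cartan n c) $$ (i, j) = (cartan n c)\<^sup>T $$ (i, j)" .
qed auto

lemma syz_mat_mult_cartan_transpose: "syz_mat * (cartan n c)\<^sup>T = cartan n c"
proof (rule eq_matI)
  fix s t assume "s < dim_row (cartan n c)" "t < dim_col (cartan n c)"
  then have st: "s < n" "t < n" by auto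
  have s: "1 \<le> s + 1" "s + 1 \<le> n" using st by auto
  let ?x = "syz_seq (s + 1)" and ?K = "pdim_inj (s + 1)"
  let ?below = "\<lambda>j. if ?x j \<le> t then 1 else 0 :: real"
  have x: "?x j < n" if "j \<le> ?K" for j
    using syz_seq_mono[OF s(2) that] syz_seq_pdim_inj_less_n[OF s] by simp
  have "(syz_mat * (cartan n c)\<^sup>T) $$ (s, t) = (\<Sum>j\<le>?K. (-1) ^ j * (cartan n c)\<^sup>T $$ (?x j, t))"
    using x st by (intro alternating_rows_mat_mult_index) auto
  also have "\<dots> = (\<Sum>j\<le>?K. (-1) ^ j * (?below j - ?below (j + 2)))"
  proof (intro sum.cong refl)
    fix j assume "j \<in> {..?K}"
    then have "(cartan n c)\<^sup>T $$ (?x j, t) = (if ?x j \<le> t \<and> t < ?x (j + 2) then 1 else 0)"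
      using cartan_index[of t "?x j"] x[of j] st by auto
    also have "\<dots> = ?below j - ?below (j + 2)"
      using syz_seq_mono[OF s(2), of j "j + 2"] by auto
    finally show "(-1) ^ j * (cartan n c)\<^sup>T $$ (?x j, t) = (-1) ^ j * (?below j - ?below (j + 2))"
      by simp
  qed
  also have "\<dots> = ?below 0 - ?below 1"
    using alternating_sum_telescope[of ?below ?K] pdim_inj(2)[OF s] by simp
  also have "\<dots> = cartan n c $$ (s, t)"
    using cartan_index[OF st] inj_start_le_iff[OF s(2), of t] inj_start_le[OF s(2)] by auto
  finally show "(syz_mat * (cartan n c)\<^sup>T) $$ (s, t) = cartan n c $$ (s, t)" .
qed auto

lemma coxeter_eq: "coxeter n c = - cosyz_mat"
proof -
  have "cosyz_mat = cosyz_mat * (cartan n c * cartan_inv)"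
    using cartan_inv(2) by simp
  also have "\<dots> = (cosyz_mat * cartan n c) * cartan_inv"
    using assoc_mult_mat[OF alternating_rows_mat_carrier cartan_carrier cartan_inv(1)] by simp
  also have "\<dots> = (cartan n c)\<^sup>T * cartan_inv"
    using cosyz_mat_mult_cartan by simp
  finally show ?thesis unfolding coxeter_def by simp
qed

lemma syz_mat_mult_cosyz_mat: "syz_mat * cosyz_mat = 1\<^sub>m n"
proof -
  have "cosyz_mat = (cartan n c)\<^sup>T * cartan_inv"
    using coxeter_eq unfolding coxeter_def by simp
  moreover have "(cartan n c)\<^sup>T \<in> carrier_mat n n" by simp
  ultimately have "syz_mat * cosyz_mat = (syz_mat * (cartan n c)\<^sup>T) * cartan_inv"
    using assoc_mult_mat[OF alternating_rows_mat_carrier _ cartan_inv(1)] by simp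
  then show ?thesis using syz_mat_mult_cartan_transpose cartan_inv by simp
qed

end


lemma bij_betw_Suc_shift_iff:
  fixes f g :: "nat \<Rightarrow> nat"
  assumes "\<And>i. i < n \<Longrightarrow> f (Suc i) = Suc (g i)"
  shows "bij_betw f {1..n} {1..n} \<longleftrightarrow> bij_betw g {0..<n} {0..<n}"
proof -
  have "bij_betw f {1..n} {1..n} \<longleftrightarrow> bij_betw (f \<circ> Suc) {0..<n} {1..n}"
    using bij_betw_comp_iff[of Suc "{0..<n}" "{1..n}" f "{1..n}"]
    by (simp add: atLeastLessThanSuc_atLeastAtMost)
  also have "\<dots> \<longleftrightarrow> bij_betw (Suc \<circ> g) {0..<n} {1..n}"
    using assms by (intro bij_betw_cong) simp_all
  also have "\<dots> \<longleftrightarrow> bij_betw g {0..<n} {0..<n}"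
  proof -
    have "bij_betw (Suc \<circ> g) A (Suc ` A) \<longleftrightarrow> bij_betw g A A" for A :: "nat set"
    proof -
      have "(Suc \<circ> g) ` A = Suc ` A \<longleftrightarrow> g ` A = A" by (metis image_comp inj_Suc inj_image_eq_iff)
      moreover have "inj_on (Suc \<circ> g) A \<longleftrightarrow> inj_on g A" by (simp add: inj_on_def)
      ultimately show ?thesis unfolding bij_betw_def by blast
    qed
    from this[of "{0..<n}"] show ?thesis by (simp add: atLeastLessThanSuc_atLeastAtMost)
  qed
  finally show ?thesis .
qed

context linear_nakayama
begin

definition sigma_idx :: "nat \<Rightarrow> nat" where
  "sigma_idx i = inv_AR_map c (i + 1) - 1"

lemma sigma_idx_eq: "i < n \<Longrightarrow> sigma_idx i = cosyz_seq i (coresol_len i) - 1"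
  unfolding sigma_idx_def using inv_AR_map_eq by simp

lemma inv_AR_map_Suc:
  assumes "i < n"
  shows "inv_AR_map c (i + 1) = sigma_idx i + 1"
  unfolding sigma_idx_def using inv_AR_map_eq[OF assms] cosyz_seq_coresol_len_bounds[OF assms] by simp

lemma sigma_idx_less: "i < n \<Longrightarrow> sigma_idx i < n"
  using sigma_idx_eq cosyz_seq_coresol_len_bounds by fastforce

lemma bij_inv_AR_map_iff: "bij_betw (inv_AR_map c) {1..n} {1..n} \<longleftrightarrow> bij_betw sigma_idx {0..<n} {0..<n}"
  using bij_betw_Suc_shift_iff inv_AR_map_Suc by simp

lemma coxeter_carrier: "coxeter n c \<in> carrier_mat n n"
  unfolding coxeter_eq by simp

lemma leading_cols_cosyz_mat: "leading_cols cosyz_mat sigma_idx"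
proof -
  have "cosyz_mat $$ (i, sigma_idx i) \<noteq> 0 \<and> (\<forall>l<sigma_idx i. cosyz_mat $$ (i, l) = 0)"
    if i: "i < n" for i
  proof -
    let ?y = "cosyz_seq i" and ?L = "coresol_len i"
    have below: "sigma_idx i < ?y k - 1" if "k < ?L" for k
    proof -
      have "?y ?L < ?y k"
        using cosyz_seq_antimono[OF i, of "Suc k" ?L] coresol_len(1)[OF i, of k] that by simp
      then show ?thesis using sigma_idx_eq[OF i] cosyz_seq_coresol_len_bounds[OF i] by (simp add: diff_less_mono)
    qed
    have entry: "cosyz_mat $$ (i, l) = (\<Sum>k\<le>?L. (-1) ^ k * (if l = ?y k - 1 then 1 else 0))"
      if "l < n" for l
      using i that unfolding alternating_rows_mat_def by simp
    have hit: "sigma_idx i = ?y k - 1 \<longleftrightarrow> k = ?L" if "k \<le> ?L" for k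
    proof (cases "k = ?L")
      case False
      then show ?thesis using below[of k] that by simp
    qed (use sigma_idx_eq[OF i] in simp)
    have "cosyz_mat $$ (i, sigma_idx i) = (\<Sum>k\<le>?L. if k = ?L then (-1) ^ k else 0)"
      unfolding entry[OF sigma_idx_less[OF i]]
    proof (intro sum.cong refl)
      fix k assume "k \<in> {..?L}"
      then show "(-1) ^ k * (if sigma_idx i = ?y k - 1 then 1 else 0) = (if k = ?L then (-1) ^ k else 0 :: real)"
        using hit[of k] by simp
    qed
    moreover have "cosyz_mat $$ (i, l) = 0" if "l < sigma_idx i" for l
    proof -
      have "l \<noteq> ?y k - 1" if "k \<le> ?L" for k
        using hit[OF that] below[of k] that \<open>l < sigma_idx i\<close> by (cases "k = ?L") auto
      then show ?thesis
        unfolding entry[OF less_trans[OF that sigma_idx_less[OF i]]] by (intro sum.neutral) auto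
    qed
    ultimately show ?thesis by simp
  qed
  then show ?thesis unfolding leading_cols_def using sigma_idx_less by simp
qed

lemma leading_cols_coxeter: "leading_cols (coxeter n c) sigma_idx"
  unfolding coxeter_eq leading_cols_uminus by (rule leading_cols_cosyz_mat)

text \<open>Since the rows syz_seq (s+1) j of cosyz_mat have distinct leading columns, evaluating
  syz_mat * cosyz_mat = 1 at the smallest of these columns picks out a single non-zero term.\<close>

lemma le_sigma_idx_syz_seq:
  assumes inj: "inj_on sigma_idx {0..<n}" and s: "s < n"
  shows "j \<le> pdim_inj (s + 1) \<Longrightarrow> s \<le> sigma_idx (syz_seq (s + 1) j)"
proof -
  have s1: "1 \<le> s + 1" "s + 1 \<le> n" using s by auto
  let ?x = "syz_seq (s + 1)" and ?K = "pdim_inj (s + 1)"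
  have x: "?x j < n" if "j \<le> ?K" for j
    using syz_seq_mono[OF s1(2) that] syz_seq_pdim_inj_less_n[OF s1] by simp
  have x_inj: "?x j \<noteq> ?x j'" if "j < j'" "j' \<le> ?K" for j j'
    using pdim_inj(1)[OF s1, of j] syz_seq_mono[OF s1(2), of "Suc j" j'] that by simp
  obtain jm where jm: "jm \<le> ?K" "\<And>j. j \<le> ?K \<Longrightarrow> sigma_idx (?x jm) \<le> sigma_idx (?x j)"
    using ex_has_least_nat[of "\<lambda>j. j \<le> ?K" 0 "\<lambda>j. sigma_idx (?x j)"] by auto
  let ?m = "sigma_idx (?x jm)"
  have m: "?m < n" using sigma_idx_less x jm(1) by simp
  have lead: "cosyz_mat $$ (i, sigma_idx i) \<noteq> 0" "\<And>l. l < sigma_idx i \<Longrightarrow> cosyz_mat $$ (i, l) = 0"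
    if "i < n" for i
    using leading_cols_cosyz_mat that unfolding leading_cols_def by auto
  have "(syz_mat * cosyz_mat) $$ (s, ?m) = (\<Sum>j\<le>?K. (-1) ^ j * cosyz_mat $$ (?x j, ?m))"
    using x s m by (intro alternating_rows_mat_mult_index) auto
  also have "\<dots> = (\<Sum>j\<le>?K. if j = jm then (-1) ^ j * cosyz_mat $$ (?x jm, ?m) else 0)"
  proof (intro sum.cong refl)
    fix j assume j: "j \<in> {..?K}"
    show "(-1) ^ j * cosyz_mat $$ (?x j, ?m) = (if j = jm then (-1) ^ j * cosyz_mat $$ (?x jm, ?m) else 0)"
    proof (cases "j = jm")
      case False
      then have "?x j \<noteq> ?x jm" using x_inj j jm(1) by (metis atMost_iff nat_neq_iff)
      then have "sigma_idx (?x j) \<noteq> ?m" using inj x j jm(1) unfolding inj_on_def by auto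
      then show ?thesis using lead(2)[OF x] jm(2) j False by (simp add: order_less_le)
    qed simp
  qed
  also have "\<dots> = (-1) ^ jm * cosyz_mat $$ (?x jm, ?m)" using jm(1) by simp
  finally have "(syz_mat * cosyz_mat) $$ (s, ?m) \<noteq> 0" using lead(1)[OF x[OF jm(1)]] by simp
  then have "?m = s" using syz_mat_mult_cosyz_mat s m by (auto split: if_splits)
  then show "j \<le> ?K \<Longrightarrow> s \<le> sigma_idx (?x j)" using jm(2)[of j] by simp
qed

lemma sigma_idx_syz_seq_pdim_inj:
  assumes inj: "inj_on sigma_idx {0..<n}" and s: "s < n"
  shows "sigma_idx (syz_seq (s + 1) (pdim_inj (s + 1))) = s"
proof -
  have s1: "1 \<le> s + 1" "s + 1 \<le> n" using s by auto
  have "sigma_idx (syz_seq (s + 1) (pdim_inj (s + 1))) \<le> s"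
    using inv_AR_map_AR_perm_le[OF s1] AR_perm_eq[OF s1] inv_AR_map_Suc[OF syz_seq_pdim_inj_less_n[OF s1]]
    by simp
  then show ?thesis using le_sigma_idx_syz_seq[OF inj s order_refl] by simp
qed

lemma AR_perm_inv_AR_map_if_bij:
  assumes bij: "bij_betw (inv_AR_map c) {1..n} {1..n}" and r: "r \<in> {1..n}"
  shows "AR_perm c (inv_AR_map c r) = r"
proof -
  have inj: "inj_on sigma_idx {0..<n}" using bij bij_inv_AR_map_iff bij_betw_imp_inj_on by blast
  have inv_AR_map_AR_perm: "inv_AR_map c (AR_perm c s) = s" if "s \<in> {1..n}" for s
  proof -
    have s: "1 \<le> s" "s \<le> n" "s - 1 < n" "s - 1 + 1 = s" using that by auto
    have "sigma_idx (syz_seq s (pdim_inj s)) = s - 1"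
      using sigma_idx_syz_seq_pdim_inj[OF inj s(3)] s(4) by simp
    then show ?thesis
      using AR_perm_eq[OF s(1,2)] inv_AR_map_Suc[OF syz_seq_pdim_inj_less_n[OF s(1,2)]] s(1) by simp
  qed
  have AR_perm_range: "AR_perm c s \<in> {1..n}" if "s \<in> {1..n}" for s
    using AR_perm_eq[of s] syz_seq_pdim_inj_less_n[of s] that by simp
  show ?thesis
    using inv_AR_map_AR_perm[OF inv_AR_map_range[OF r]] bij_betw_imp_inj_on[OF bij] r
      AR_perm_range[OF inv_AR_map_range[OF r]] by (auto dest: inj_onD)
qed

lemma invertible_one_mat: "invertible_mat (1\<^sub>m n :: real mat)"
  unfolding invertible_mat_def inverts_mat_def by (intro conjI exI[of _ "1\<^sub>m n"]) auto

lemma bij_inv_AR_map_iff_bruhat: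
  "bij_betw (inv_AR_map c) {1..n} {1..n} \<longleftrightarrow>
   (\<exists>p U2. bruhat_decomp n (coxeter n c) (1\<^sub>m n) p U2)"
proof
  assume "bij_betw (inv_AR_map c) {1..n} {1..n}"
  then have "bij_betw sigma_idx {0..<n} {0..<n}" using bij_inv_AR_map_iff by simp
  then obtain p U where "p permutes {0..<n}" "U \<in> carrier_mat n n" "upper_triangular U"
      "invertible_mat U" "coxeter n c = perm_matrix n p * U"
    using perm_mult_upper_triangular_if_leading_cols[OF coxeter_carrier leading_cols_coxeter] by blast
  then have "bruhat_decomp n (coxeter n c) (1\<^sub>m n) p U"
    unfolding bruhat_decomp_def using invertible_one_mat by simp
  then show "\<exists>p U2. bruhat_decomp n (coxeter n c) (1\<^sub>m n) p U2" by blast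
next
  assume "\<exists>p U2. bruhat_decomp n (coxeter n c) (1\<^sub>m n) p U2"
  then obtain p U where p: "p permutes {0..<n}" and U: "U \<in> carrier_mat n n" "upper_triangular U"
      "invertible_mat U" and eq: "coxeter n c = perm_matrix n p * U"
    unfolding bruhat_decomp_def by auto
  have "sigma_idx (p j) = j" if "j < n" for j
    using leading_cols_perm_mult[OF _ p U that] leading_cols_coxeter eq by simp
  then have "j \<in> sigma_idx ` {0..<n}" if "j < n" for j
    using permutes_in_image[OF p, of j] that by (intro image_eqI[of j sigma_idx "p j"]) auto
  then have "{0..<n} \<subseteq> sigma_idx ` {0..<n}" by auto
  then have "bij_betw sigma_idx {0..<n} {0..<n}"
    using sigma_idx_less finite_surj_inj[of "{0..<n}" sigma_idx]
    by (auto simp: bij_betw_def)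
  then show "bij_betw (inv_AR_map c) {1..n} {1..n}" using bij_inv_AR_map_iff by simp
qed

lemma bruhat_perm_eq_AR_perm:
  assumes bij: "bij_betw (inv_AR_map c) {1..n} {1..n}"
    and br: "bruhat_decomp n (coxeter n c) U1 p U2" and i: "i < n"
  shows "p i + 1 = AR_perm c (i + 1)"
proof -
  have "bij_betw sigma_idx {0..<n} {0..<n}" using bij bij_inv_AR_map_iff by simp
  then obtain q U0 where q: "q permutes {0..<n}" "\<And>j. j < n \<Longrightarrow> sigma_idx (q j) = j"
      and U0: "U0 \<in> carrier_mat n n" "upper_triangular U0" "invertible_mat U0"
      and eq: "coxeter n c = perm_matrix n q * U0"
    using perm_mult_upper_triangular_if_leading_cols[OF coxeter_carrier leading_cols_coxeter] by blast
  have "p i = q i"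
    using bruhat_perm_unique[OF _ _ _ _ _ U0 _ q(1) _ i] br eq unfolding bruhat_decomp_def by auto
  moreover have qi: "q i < n" using permutes_in_image[OF q(1)] i by simp
  then have "inv_AR_map c (q i + 1) = i + 1" using inv_AR_map_Suc q(2) i by simp
  moreover have "AR_perm c (inv_AR_map c (q i + 1)) = q i + 1"
    using AR_perm_inv_AR_map_if_bij[OF bij] qi by simp
  ultimately show ?thesis by simp
qed

end

theorem theorem4p9:
  fixes n :: nat and c :: "nat \<Rightarrow> nat"
  assumes "kupisch n c"
  shows "(auslander_regular n c \<longleftrightarrow> bij_betw (inv_AR_map c) {1..n} {1..n})
       \<and> (bij_betw (inv_AR_map c) {1..n} {1..n} \<longleftrightarrow>
            (\<exists>p U2. bruhat_decomp n (coxeter n c) (1\<^sub>m n) p U2))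
       \<and> (auslander_regular n c \<longrightarrow>
            (\<forall>U1 p U2. bruhat_decomp n (coxeter n c) U1 p U2 \<longrightarrow>
               (\<forall>i < n. p i + 1 = AR_perm c (i + 1))))"
proof -
  interpret linear_nakayama n c using assms by unfold_locales
  have regular_iff_bij: "auslander_regular n c \<longleftrightarrow> bij_betw (inv_AR_map c) {1..n} {1..n}"
    using auslander_regular_iff_AR_perm_inv_AR_map bij_inv_AR_map_if_AR_perm_inv_AR_map
      AR_perm_inv_AR_map_if_bij by blast
  then show ?thesis using bij_inv_AR_map_iff_bruhat bruhat_perm_eq_AR_perm by blast
qed

end
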